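(* Let $I$ be an irreducible numerical semigroup. Then the graph $\mathrm{G}([\theta(I),I])$ is a rooted tree with root $I$, and for every vertex $P$ of this tree, the set of children of $P$ is $\{P\setminus\{x\}\mid x\in\mathrm{msg}(P),\ \frac{\mathrm{F}(I)}{2}<x<\mathrm{F}(I),\ \mathrm{h}(P)<x\}$.
   Context: A numerical semigroup is a subset $S\subseteq\mathbb{N}$ closed under addition with $0\in S$ and $\mathbb{N}\setminus S$ finite; $\mathrm{F}(S)=\max(\mathbb{Z}\setminus S)$; $\mathrm{msg}(P)$ is the minimal system of generators of $P$; $\langle X\rangle$ is the submonoid of $(\mathbb{N},+)$ generated by $X$. Irreducible: not the intersection of two numerical semigroups properly containing it. $\Delta(S)=\{s\in S\mid s<\frac{\mathrm{F}(S)}{2}\}$ and $\theta(S)=\langle\Delta(S)\rangle\cup\{\mathrm{F}(S)+1,\mathrm{F}(S)+2,\ldots\}$. For numerical semigroups $A\subseteq B$, $[A,B]$ is the set of numerical semigroups $X$ with $A\subseteq X\subseteq B$; $\mathrm{F}_B(X)=\max(B\setminus X)$ if $X\subsetneq B$ and $\mathrm{F}_B(B)=-1$. $\mathrm{G}([A,B])$ is the directed graph with vertex set $[A,B]$ and an edge $(X,Y)$ whenever $X\cup\{\mathrm{F}_B(X)\}=Y$; a rooted tree with root $r$ is a graph in which every other vertex has a unique path to $r$, and $X$ is a child of $Y$ if $(X,Y)$ is an edge. For $P\in[\theta(I),I]$ with $P\ne I$, $\mathrm{h}(P)=\max\{x\in\mathbb{N}\setminus P\mid \mathrm{F}(P)-x\in\mathbb{N}\setminus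 P,\ x\ne\mathrm{F}(P)/2\}$ (which equals $\mathrm{F}_I(P)$), and $\mathrm{h}(I)=-1$. *)

theory Defs
  imports Main
begin

definition numerical_semigroup :: "nat set \<Rightarrow> bool" where
  "numerical_semigroup S \<longleftrightarrow> 0 \<in> S \<and> (\<forall>x\<in>S. \<forall>y\<in>S. x + y \<in> S) \<and> finite (UNIV - S)"

definition frob :: "nat set \<Rightarrow> int" where
  "frob S = (if S = UNIV then -1 else int (Max (UNIV - S)))"

inductive_set gen :: "nat set \<Rightarrow> nat set" for X :: "nat set" where
  gen_zero: "0 \<in> gen X"
| gen_base: "x \<in> X \<Longrightarrow> x \<in> gen X"
| gen_add: "a \<in> gen X \<Longrightarrow> b \<in> gen X \<Longrightarrow> a + b \<in> gen X"

definition msg :: "nat set \<Rightarrow> nat set" where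
  "msg P = {x \<in> P. x \<noteq> 0 \<and> \<not> (\<exists>a\<in>P. \<exists>b\<in>P. a \<noteq> 0 \<and> b \<noteq> 0 \<and> a + b = x)}"

definition irreducible_ns :: "nat set \<Rightarrow> bool" where
  "irreducible_ns S \<longleftrightarrow> numerical_semigroup S \<and>
     \<not> (\<exists>A B. numerical_semigroup A \<and> numerical_semigroup B \<and> S \<subset> A \<and> S \<subset> B \<and> S = A \<inter> B)"

definition Delta :: "nat set \<Rightarrow> nat set" where
  "Delta S = {s \<in> S. 2 * int s < frob S}"

definition theta :: "nat set \<Rightarrow> nat set" where
  "theta S = gen (Delta S) \<union> {n. int n > frob S}"

definition ns_interval :: "nat set \<Rightarrow> nat set \<Rightarrow> nat set set" where
  "ns_interval A B = {X. numerical_semigroup X \<and> A \<subseteq> X \<and> X \<subseteq> B}"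

definition FB :: "nat set \<Rightarrow> nat set \<Rightarrow> int" where
  "FB B X = (if X = B then -1 else int (Max (B - X)))"

text \<open>Edge (X,Y) of G([A,B]): X \<union> {F_B(X)} = Y (impossible when X = B, since F_B(B) = -1).\<close>
definition ns_edge :: "nat set \<Rightarrow> nat set \<Rightarrow> nat set \<Rightarrow> nat set \<Rightarrow> bool" where
  "ns_edge A B X Y \<longleftrightarrow> X \<in> ns_interval A B \<and> Y \<in> ns_interval A B \<and>
     X \<noteq> B \<and> insert (nat (FB B X)) X = Y"

definition is_path :: "'a set \<Rightarrow> ('a \<Rightarrow> 'a \<Rightarrow> bool) \<Rightarrow> 'a list \<Rightarrow> bool" where
  "is_path V E p \<longleftrightarrow> p \<noteq> [] \<and> distinct p \<and> set p \<subseteq> V \<and>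
     (\<forall>i. Suc i < length p \<longrightarrow> E (p ! i) (p ! Suc i))"

definition rooted_tree :: "'a set \<Rightarrow> ('a \<Rightarrow> 'a \<Rightarrow> bool) \<Rightarrow> 'a \<Rightarrow> bool" where
  "rooted_tree V E r \<longleftrightarrow> r \<in> V \<and>
     (\<forall>v\<in>V. v \<noteq> r \<longrightarrow> (\<exists>!p. is_path V E p \<and> hd p = v \<and> last p = r))"

definition hfun :: "nat set \<Rightarrow> nat set \<Rightarrow> int" where
  "hfun I P = (if P = I then -1 else
     int (Max {x. x \<notin> P \<and> int x \<le> frob P \<and> nat (frob P - int x) \<notin> P \<and> 2 * int x \<noteq> frob P}))"

end

theory Submission
  imports Defs
begin

text \<open>
  For numerical semigroups A \<subseteq> B, adding F_B(X) to a vertex X \<noteq> B of G([A,B]) again gives a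
  numerical semigroup in [A,B]. So every vertex except B has exactly one outgoing edge, and
  each edge shrinks B - X: the graph is a tree rooted at B. Reading the edge backwards,
  P - {x} is a child of P exactly when x is a minimal generator of P, x \<notin> A and x > F_B(P).

  For A = \<theta>(I) and B = I, a minimal generator x of P lies outside \<theta>(I) exactly when
  F(I)/2 < x < F(I). Irreducibility is needed only for h(P) = F_I(P): an irreducible I
  satisfies F(I) - x \<in> I for every gap x \<noteq> F(I)/2, so every x counted by h is either a gap
  of P inside I or smaller than the gap F(I) - x of P inside I.
\<close>

lemma numerical_semigroup_zero: "numerical_semigroup S \<Longrightarrow> 0 \<in> S"
  by (simp add: numerical_semigroup_def)

lemma numerical_semigroup_add: "numerical_semigroup S \<Longrightarrow> a \<in> S \<Longrightarrow> b \<in> S \<Longrightarrow> a + b \<in> S"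
  by (simp add: numerical_semigroup_def)

lemma numerical_semigroup_finite_diff: "numerical_semigroup S \<Longrightarrow> finite (B - S)"
  by (auto simp: numerical_semigroup_def intro: finite_subset[rotated])

lemma numerical_semigroup_UNIV: "numerical_semigroup UNIV"
  by (simp add: numerical_semigroup_def)

lemma numerical_semigroup_insert:
  assumes S: "numerical_semigroup S" and "h + h \<in> S" and "\<And>s. s \<in> S \<Longrightarrow> s \<noteq> 0 \<Longrightarrow> h + s \<in> S"
  shows "numerical_semigroup (insert h S)"
proof -
  have "a + b \<in> insert h S" if "a \<in> insert h S" "b \<in> insert h S" for a b
    using that assms by (cases "a = 0"; cases "b = 0") (auto simp: numerical_semigroup_def add.commute)
  then show ?thesis
    using S numerical_semigroup_finite_diff[OF S, of UNIV] by (simp add: numerical_semigroup_def)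
qed

lemma Max_diff_in:
  assumes "numerical_semigroup X" "X \<subseteq> B" "X \<noteq> B"
  shows "Max (B - X) \<in> B - X"
  using assms by (intro Max_in numerical_semigroup_finite_diff) auto

lemma Max_diff_ge:
  "numerical_semigroup X \<Longrightarrow> z \<in> B - X \<Longrightarrow> z \<le> Max (B - X)"
  by (intro Max_ge numerical_semigroup_finite_diff)

lemma numerical_semigroup_insert_Max_diff:
  assumes X: "numerical_semigroup X" and B: "numerical_semigroup B" and "X \<subseteq> B" "X \<noteq> B"
  shows "numerical_semigroup (insert (Max (B - X)) X)"
proof -
  let ?m = "Max (B - X)"
  have m: "?m \<in> B - X" using Max_diff_in assms by blast
  have shift: "?m + b \<in> X" if "b \<in> B" "b \<noteq> 0" for b
  proof -
    have "?m + b \<in> B" using m that numerical_semigroup_add[OF B] by blast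
    moreover have "\<not> ?m + b \<le> ?m" using that by simp
    ultimately show ?thesis using Max_diff_ge[OF X] by blast
  qed
  have "?m \<noteq> 0" using m numerical_semigroup_zero[OF X] by (metis DiffD2)
  then show ?thesis
    using numerical_semigroup_insert[OF X] shift m \<open>X \<subseteq> B\<close> by blast
qed

lemma numerical_semigroup_Diff_msg:
  assumes P: "numerical_semigroup P" and x: "x \<in> msg P"
  shows "numerical_semigroup (P - {x})"
proof -
  have "a + b \<in> P - {x}" if "a \<in> P - {x}" "b \<in> P - {x}" for a b
    using that x numerical_semigroup_add[OF P, of a b] unfolding msg_def
    by (cases "a = 0"; cases "b = 0") auto
  moreover have "0 \<in> P - {x}" using P x by (simp add: msg_def numerical_semigroup_zero)
  moreover have "finite (UNIV - (P - {x}))"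
    using numerical_semigroup_finite_diff[OF P, of UNIV]
    by (auto intro: finite_subset[of _ "insert x (UNIV - P)"])
  ultimately show ?thesis by (simp add: numerical_semigroup_def)
qed

lemma is_path_Cons_Cons:
  "is_path V E (a # b # p) \<longleftrightarrow> a \<in> V \<and> E a b \<and> a \<notin> set (b # p) \<and> is_path V E (b # p)"
proof -
  have split: "(\<forall>i. Q i) \<longleftrightarrow> Q 0 \<and> (\<forall>i. Q (Suc i))" for Q :: "nat \<Rightarrow> bool"
    by (metis not0_implies_Suc)
  show ?thesis unfolding is_path_def by (subst split) auto
qed

lemma FB_eq_Max: "X \<noteq> B \<Longrightarrow> FB B X = int (Max (B - X))"
  by (simp add: FB_def)

lemma ns_edge_unique: "ns_edge A B X Y \<Longrightarrow> ns_edge A B X Z \<Longrightarrow> Y = Z"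
  by (simp add: ns_edge_def)

lemma ns_edge_not_root: "ns_edge A B B Y \<Longrightarrow> False"
  by (simp add: ns_edge_def)

lemma ns_edge_insert_Max_diff:
  assumes B: "numerical_semigroup B" and X: "X \<in> ns_interval A B" "X \<noteq> B"
  shows "ns_edge A B X (insert (Max (B - X)) X)"
  using X Max_diff_in[of X B] numerical_semigroup_insert_Max_diff[OF _ B, of X]
  by (auto simp: ns_edge_def ns_interval_def FB_eq_Max)

lemma is_path_to_root_unique:
  assumes "is_path V (ns_edge A B) p" "is_path V (ns_edge A B) q" "hd p = hd q" "last p = B" "last q = B"
  shows "p = q"
  using assms
proof (induction p arbitrary: q)
  case Nil
  then show ?case by (simp add: is_path_def)
next
  case (Cons a p)
  obtain q' where q: "q = a # q'"
    using Cons.prems by (cases q) (auto simp: is_path_def)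
  show ?case
  proof (cases p)
    case Nil
    then have "a = B" using Cons.prems by simp
    then have "q' = []"
      using Cons.prems(2) q ns_edge_not_root is_path_Cons_Cons by (metis list.exhaust)
    then show ?thesis using q Nil by simp
  next
    case (Cons b p')
    then have ab: "ns_edge A B a b" and p: "is_path V (ns_edge A B) p"
      using Cons.prems(1) is_path_Cons_Cons by metis+
    obtain c q'' where q': "q' = c # q''"
      using Cons.prems(5) q ab ns_edge_not_root by (cases q') auto
    then have ac: "ns_edge A B a c" and q'_path: "is_path V (ns_edge A B) q'"
      using Cons.prems(2) q is_path_Cons_Cons by metis+
    have "p = q'"
      using Cons.IH[OF p q'_path] ns_edge_unique[OF ab ac] Cons.prems q q' \<open>p = b # p'\<close> by simp
    then show ?thesis using q by simp
  qed
qed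

text \<open>The invariant X \<subseteq> Y keeps X off the rest of the path, which makes the path distinct.\<close>

lemma is_path_to_root_exists:
  assumes B: "numerical_semigroup B" and X: "X \<in> ns_interval A B"
  shows "\<exists>p. is_path (ns_interval A B) (ns_edge A B) p \<and> hd p = X \<and> last p = B \<and> (\<forall>Y\<in>set p. X \<subseteq> Y)"
  using X
proof (induction "card (B - X)" arbitrary: X rule: less_induct)
  case less
  show ?case
  proof (cases "X = B")
    case True
    then show ?thesis using less.prems by (intro exI[of _ "[B]"]) (auto simp: is_path_def)
  next
    case False
    let ?m = "Max (B - X)"
    let ?Y = "insert ?m X"
    have X: "numerical_semigroup X" "X \<subseteq> B" using less.prems by (auto simp: ns_interval_def)
    have edge: "ns_edge A B X ?Y" using ns_edge_insert_Max_diff[OF B less.prems False] .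
    have m: "?m \<in> B - X" using Max_diff_in X False by blast
    have "B - ?Y = (B - X) - {?m}" by auto
    then have "card (B - ?Y) < card (B - X)"
      using card_Diff1_less[OF numerical_semigroup_finite_diff[OF X(1)] m] by simp
    moreover have "?Y \<in> ns_interval A B" using edge by (simp add: ns_edge_def)
    ultimately obtain p where p: "is_path (ns_interval A B) (ns_edge A B) p"
      "hd p = ?Y" "last p = B" "\<forall>Z\<in>set p. ?Y \<subseteq> Z"
      using less.hyps by blast
    obtain p' where p': "p = ?Y # p'" using p(1,2) by (cases p) (auto simp: is_path_def)
    have "X \<notin> set p" using p(4) m by auto
    then have "is_path (ns_interval A B) (ns_edge A B) (X # p)"
      using p' p(1) edge less.prems by (simp add: is_path_Cons_Cons)
    then show ?thesis using p p' by (intro exI[of _ "X # p"]) auto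
  qed
qed

lemma rooted_tree_ns_interval:
  assumes B: "numerical_semigroup B" and "A \<subseteq> B"
  shows "rooted_tree (ns_interval A B) (ns_edge A B) B"
  unfolding rooted_tree_def
proof (intro conjI ballI impI)
  show "B \<in> ns_interval A B" using assms by (simp add: ns_interval_def)
  fix X assume X: "X \<in> ns_interval A B"
  with is_path_to_root_exists[OF B X] is_path_to_root_unique
  show "\<exists>!p. is_path (ns_interval A B) (ns_edge A B) p \<and> hd p = X \<and> last p = B"
    by metis
qed

lemma ns_edge_children:
  assumes B: "numerical_semigroup B" and P: "P \<in> ns_interval A B"
  shows "{X. ns_edge A B X P} = {P - {x} | x. x \<in> msg P \<and> x \<notin> A \<and> FB B P < int x}"
proof (intro set_eqI iffI)
  fix X assume "X \<in> {X. ns_edge A B X P}"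
  then have X: "X \<in> ns_interval A B" "X \<noteq> B" and XP: "ns_edge A B X P" by (auto simp: ns_edge_def)
  define x where "x = Max (B - X)"
  have Xns: "numerical_semigroup X" and AX: "A \<subseteq> X" and XB: "X \<subseteq> B"
    using X by (auto simp: ns_interval_def)
  have x: "x \<in> B - X" unfolding x_def using Max_diff_in Xns XB X(2) by blast
  have P_eq: "P = insert x X"
    using ns_edge_unique[OF XP ns_edge_insert_Max_diff[OF B X]] by (simp add: x_def)
  have "x \<noteq> 0" using x numerical_semigroup_zero[OF Xns] by (metis DiffD2)
  moreover have "a + b \<noteq> x" if "a \<in> P" "b \<in> P" "a \<noteq> 0" "b \<noteq> 0" for a b
    using that x P_eq numerical_semigroup_add[OF Xns, of a b] by auto
  ultimately have "x \<in> msg P" using P_eq by (auto simp: msg_def)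
  moreover have "FB B P < int x"
  proof (cases "P = B")
    case False
    then have "Max (B - P) \<in> B - X" "Max (B - P) \<noteq> x"
      using Max_diff_in[of P B] P P_eq by (auto simp: ns_interval_def)
    then have "Max (B - P) < x" using Max_diff_ge[OF Xns] x_def by fastforce
    then show ?thesis using False by (simp add: FB_eq_Max)
  qed (simp add: FB_def)
  moreover have "X = P - {x}" using P_eq x by auto
  ultimately show "X \<in> {P - {x} | x. x \<in> msg P \<and> x \<notin> A \<and> FB B P < int x}"
    using x AX by blast
next
  fix X assume "X \<in> {P - {x} | x. x \<in> msg P \<and> x \<notin> A \<and> FB B P < int x}"
  then obtain x where X: "X = P - {x}" and x: "x \<in> msg P" "x \<notin> A" "FB B P < int x" by blast
  have Pns: "numerical_semigroup P" and AP: "A \<subseteq> P" and PB: "P \<subseteq> B"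
    using P by (auto simp: ns_interval_def)
  have xP: "x \<in> P" using x by (simp add: msg_def)
  have Xns: "numerical_semigroup X" using numerical_semigroup_Diff_msg[OF Pns x(1)] X by simp
  have XI: "X \<in> ns_interval A B" "X \<noteq> B"
    using Xns AP PB X x(2) xP by (auto simp: ns_interval_def)
  have "Max (B - X) = x"
  proof (rule Max_eqI)
    show "finite (B - X)" using numerical_semigroup_finite_diff[OF Xns] .
    show "x \<in> B - X" using X xP PB by auto
    show "z \<le> x" if "z \<in> B - X" for z
    proof (cases "z = x")
      case False
      then have "z \<in> B - P" "P \<noteq> B" using that X by auto
      then show ?thesis using Max_diff_ge[OF Pns \<open>z \<in> B - P\<close>] x(3) by (simp add: FB_eq_Max)
    qed simp
  qed
  then have "ns_edge A B X (insert x X)" using ns_edge_insert_Max_diff[OF B XI] by simp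
  then show "X \<in> {X. ns_edge A B X P}" using X xP by (simp add: insert_absorb)
qed

lemma frob_less_in:
  assumes "numerical_semigroup S" "frob S < int n"
  shows "n \<in> S"
proof (cases "S = UNIV")
  case False
  then have "\<not> n \<le> Max (UNIV - S)" using assms(2) by (simp add: frob_def)
  then show ?thesis using Max_ge[OF numerical_semigroup_finite_diff[OF assms(1)], of n] by blast
qed simp

lemma frob_notin: "numerical_semigroup S \<Longrightarrow> frob S = int F \<Longrightarrow> F \<notin> S"
  using Max_in[OF numerical_semigroup_finite_diff[of S UNIV]]
  by (auto simp: frob_def split: if_splits)

lemma frob_diff_notin:
  assumes S: "numerical_semigroup S" and F: "frob S = int F" and z: "z \<in> S" "z \<le> F"
  shows "F - z \<notin> S"
proof
  assume "F - z \<in> S"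
  then have "F - z + z \<in> S" using numerical_semigroup_add[OF S _ z(1)] by blast
  then show False using frob_notin[OF S F] z(2) by simp
qed

lemma frob_eqI:
  assumes "numerical_semigroup S" "F \<notin> S" "\<And>n. F < n \<Longrightarrow> n \<in> S"
  shows "frob S = int F"
proof -
  have "Max (UNIV - S) = F"
    using assms numerical_semigroup_finite_diff[OF assms(1)] by (intro Max_eqI) (auto simp: not_le[symmetric])
  then show ?thesis using assms(2) by (auto simp: frob_def)
qed

lemma gen_subset:
  assumes "D \<subseteq> S" "numerical_semigroup S"
  shows "gen D \<subseteq> S"
proof
  fix z assume "z \<in> gen D"
  then show "z \<in> S"
    by induction (use assms in \<open>auto simp: numerical_semigroup_zero numerical_semigroup_add\<close>)
qed

lemma gen_cases:
  "z \<in> gen D \<Longrightarrow> z = 0 \<or> z \<in> D \<or> (\<exists>a\<in>gen D. \<exists>b\<in>gen D. a \<noteq> 0 \<and> b \<noteq> 0 \<and> a + b = z)"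
proof (induction rule: gen.induct)
  case (gen_add a b)
  then show ?case by (cases "a = 0"; cases "b = 0") (auto intro: gen.intros)
qed auto

lemma theta_subset: "numerical_semigroup I \<Longrightarrow> theta I \<subseteq> I"
  using gen_subset[of "Delta I" I] frob_less_in[of I] by (auto simp: theta_def Delta_def)

lemma frob_theta_interval:
  assumes I: "numerical_semigroup I" and P: "P \<in> ns_interval (theta I) I"
  shows "frob P = frob I"
proof (cases "I = UNIV")
  case True
  then have "theta I = UNIV" by (auto simp: theta_def frob_def)
  then have "P = I" using P True by (auto simp: ns_interval_def)
  then show ?thesis by simp
next
  case False
  then obtain F where F: "frob I = int F" by (simp add: frob_def)
  have "F \<notin> P" using frob_notin[OF I F] P by (auto simp: ns_interval_def)
  moreover have "n \<in> P" if "F < n" for n using that P F by (auto simp: ns_interval_def theta_def)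
  ultimately show ?thesis using frob_eqI P F by (simp add: ns_interval_def)
qed

lemma notin_theta_bounds:
  assumes I: "numerical_semigroup I" and x: "x \<in> I" "x \<notin> theta I"
  shows "frob I < 2 * int x \<and> int x < frob I"
proof -
  have "x \<notin> Delta I" using x gen.gen_base by (auto simp: theta_def)
  then have "2 * int x \<ge> frob I" "int x \<le> frob I" using x by (auto simp: theta_def Delta_def)
  moreover have "int x \<noteq> frob I" using frob_notin[OF I] x(1) by auto
  moreover have "2 * int x \<noteq> frob I"
  proof
    assume "2 * int x = frob I"
    then have "frob I = int (x + x)" by simp
    then show False using frob_notin[OF I] numerical_semigroup_add[OF I x(1) x(1)] by blast
  qed
  ultimately show ?thesis by simp
qed

lemma msg_notin_theta_iff:
  assumes I: "numerical_semigroup I" and P: "P \<in> ns_interval (theta I) I" and x: "x \<in> msg P"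
  shows "x \<notin> theta I \<longleftrightarrow> frob I < 2 * int x \<and> int x < frob I"
proof
  show "frob I < 2 * int x \<and> int x < frob I" if "x \<notin> theta I"
    using notin_theta_bounds[OF I _ that] P x by (auto simp: ns_interval_def msg_def)
next
  assume bounds: "frob I < 2 * int x \<and> int x < frob I"
  have "gen (Delta I) \<subseteq> P" using P by (auto simp: ns_interval_def theta_def)
  have "x \<notin> gen (Delta I)"
  proof
    assume "x \<in> gen (Delta I)"
    moreover have "x \<noteq> 0" "x \<notin> Delta I" using x bounds by (auto simp: msg_def Delta_def)
    ultimately obtain a b where "a \<in> P" "b \<in> P" "a \<noteq> 0" "b \<noteq> 0" "a + b = x"
      using gen_cases \<open>gen (Delta I) \<subseteq> P\<close> by blast
    then show False using x by (auto simp: msg_def)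
  qed
  then show "x \<notin> theta I" using bounds by (simp add: theta_def)
qed

lemma irreducible_ns_gap_reflection:
  assumes irr: "irreducible_ns I" and F: "frob I = int F"
    and y: "y \<notin> I" "y \<le> F" "2 * y \<noteq> F"
  shows "F - y \<in> I"
proof (rule ccontr)
  assume Fy: "F - y \<notin> I"
  have I: "numerical_semigroup I" using irr by (simp add: irreducible_ns_def)
  have big: "n \<in> I" if "F < n" for n using frob_less_in[OF I] F that by simp
  define G where "G = {z. z \<notin> I \<and> z \<le> F \<and> F - z \<notin> I \<and> 2 * z \<noteq> F}"
  have G_fin: "finite G" unfolding G_def by (rule finite_subset[of _ "{..F}"]) auto
  have "y \<in> G" "F - y \<in> G" using y Fy by (auto simp: G_def)
  define h where "h = Max G"
  have "h \<in> G" using Max_in[OF G_fin] \<open>y \<in> G\<close> unfolding h_def by blast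
  then have h: "h \<notin> I" "h \<le> F" "F - h \<notin> I" "2 * h \<noteq> F" by (simp_all add: G_def)
  have h_max: "z \<le> h" if "z \<in> G" for z using Max_ge[OF G_fin that] by (simp add: h_def)
  have "y \<le> h" "F - y \<le> h" using h_max \<open>y \<in> G\<close> \<open>F - y \<in> G\<close> by auto
  then have "F < 2 * h" using h(4) y(2) by linarith
  \<comment> \<open>Maximality of h in G makes I \<union> {h} a semigroup; with I \<union> {F} this decomposes I.\<close>
  have "h + b \<in> I" if b: "b \<in> I" "b \<noteq> 0" for b
  proof (rule ccontr)
    assume hb: "h + b \<notin> I"
    then have le: "h + b \<le> F" using big by (meson not_le)
    have "F - (h + b) \<notin> I"
    proof
      assume "F - (h + b) \<in> I"
      then have "F - (h + b) + b \<in> I" using numerical_semigroup_add[OF I _ b(1)] by blast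
      moreover have "F - (h + b) + b = F - h" using le by simp
      ultimately show False using h(3) by simp
    qed
    then have "h + b \<in> G" using hb le \<open>F < 2 * h\<close> by (simp add: G_def)
    then show False using h_max[of "h + b"] b(2) by simp
  qed
  moreover have "h + h \<in> I" using big[of "h + h"] \<open>F < 2 * h\<close> by simp
  ultimately have "numerical_semigroup (insert h I)" using numerical_semigroup_insert[OF I] by blast
  moreover have "insert F I = insert (Max (UNIV - I)) I" using F frob_notin[OF I F]
    by (simp add: frob_def split: if_splits)
  then have "numerical_semigroup (insert F I)"
    using numerical_semigroup_insert_Max_diff[OF I numerical_semigroup_UNIV] frob_notin[OF I F] by auto
  moreover have "h \<noteq> F" using h(3) numerical_semigroup_zero[OF I] by auto
  then have "I \<subset> insert h I" "I \<subset> insert F I" "I = insert h I \<inter> insert F I"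
    using h(1) frob_notin[OF I F] by auto
  ultimately show False using irr unfolding irreducible_ns_def by blast
qed

lemma hfun_eq_FB:
  assumes irr: "irreducible_ns I" and P: "P \<in> ns_interval (theta I) I"
  shows "hfun I P = FB I P"
proof (cases "P = I")
  case False
  have I: "numerical_semigroup I" using irr by (simp add: irreducible_ns_def)
  have Pns: "numerical_semigroup P" and PI: "P \<subseteq> I" and theta: "theta I \<subseteq> P"
    using P by (auto simp: ns_interval_def)
  define m where "m = Max (I - P)"
  have m: "m \<in> I - P" using Max_diff_in[OF Pns PI False] by (simp add: m_def)
  have gap_bounds: "frob I < 2 * int z \<and> int z < frob I" if "z \<in> I - P" for z
    using notin_theta_bounds[OF I] that theta by blast
  define F where "F = nat (frob I)"
  have F: "frob I = int F" using gap_bounds[OF m] by (simp add: F_def)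
  have "frob P = int F" using frob_theta_interval[OF I P] F by simp
  define H where "H = {x. x \<notin> P \<and> x \<le> F \<and> F - x \<notin> P \<and> 2 * x \<noteq> F}"
  have "hfun I P = int (Max H)"
    using False \<open>frob P = int F\<close> unfolding hfun_def H_def
    by (simp, intro arg_cong[where f=Max] Collect_cong) (auto simp: nat_diff_distrib')
  moreover have "Max H = m"
  proof (rule Max_eqI)
    show "finite H" unfolding H_def by (rule finite_subset[of _ "{..F}"]) auto
    have "F - m \<notin> I" using frob_diff_notin[OF I F, of m] m gap_bounds[OF m] F by simp
    then show "m \<in> H" using m gap_bounds[OF m] PI F by (auto simp: H_def)
    show "y \<le> m" if y: "y \<in> H" for y
    proof (cases "y \<in> I")
      case True
      then show ?thesis using y Max_diff_ge[OF Pns] by (auto simp: H_def m_def)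
    next
      case False
      then have "F - y \<in> I - P"
        using irreducible_ns_gap_reflection[OF irr F] y by (auto simp: H_def)
      have "y \<le> F" using y by (simp add: H_def)
      have "F < 2 * (F - y)" using gap_bounds[OF \<open>F - y \<in> I - P\<close>] F by (simp; arith)
      moreover have "F - y \<le> m" using Max_diff_ge[OF Pns \<open>F - y \<in> I - P\<close>] by (simp add: m_def)
      ultimately show ?thesis using \<open>y \<le> F\<close> by linarith
    qed
  qed
  ultimately show ?thesis using False by (simp add: FB_eq_Max m_def)
qed (simp add: hfun_def FB_def)

theorem corollary29:
  fixes I :: "nat set"
  assumes "irreducible_ns I"
  shows "rooted_tree (ns_interval (theta I) I) (ns_edge (theta I) I) I \<and>
    (\<forall>P \<in> ns_interval (theta I) I.
       {X. ns_edge (theta I) I X P} =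
       {P - {x} | x. x \<in> msg P \<and> frob I < 2 * int x \<and> int x < frob I \<and> hfun I P < int x})"
proof -
  have I: "numerical_semigroup I" using assms by (simp add: irreducible_ns_def)
  have children: "{X. ns_edge (theta I) I X P} =
      {P - {x} | x. x \<in> msg P \<and> frob I < 2 * int x \<and> int x < frob I \<and> hfun I P < int x}"
    if P: "P \<in> ns_interval (theta I) I" for P
  proof -
    have "x \<in> msg P \<and> x \<notin> theta I \<and> FB I P < int x \<longleftrightarrow>
        x \<in> msg P \<and> frob I < 2 * int x \<and> int x < frob I \<and> hfun I P < int x" for x
      using msg_notin_theta_iff[OF I P] hfun_eq_FB[OF assms P] by auto
    then show ?thesis using ns_edge_children[OF I P] by simp
  qed
  show ?thesis using rooted_tree_ns_interval[OF I theta_subset[OF I]] children by blast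
qed

end
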